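(* Let $\pi(m)=(1/2)^m$ for $m\in\mathbb{N}^+$ (and $0$ otherwise), and let the proposal be $q(m,\{m+1\})=\theta=1-q(m,\{m-1\})$ for $m\in\mathbb{Z}$, $\theta\in(0,1)$. For $m,N\in\mathbb{N}^+$ let the weights be $$W_{m,N}=\frac{b_m-\varepsilon_m}{N}\,\mathrm{Bin}(N,s_m)+\varepsilon_m,$$ with $b_m=m$, $\varepsilon_m=m^{-(3-(m\bmod 3))}$, $\mathrm{Bin}(N,s)$ a binomial random variable with parameters $N$ and $s$, and $s_m\in[0,1]$ chosen so that $\mathbb{E}[W_{m,N}]=1$ (i.e. $s_m=\frac{1-\varepsilon_m}{b_m-\varepsilon_m}$ whenever $b_m\neq\varepsilon_m$). Then for every $N\in\mathbb{N}^+$ the chain generated by the noisy kernel $\tilde P_N$ is transient.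
   Context: Noisy Metropolis–Hastings kernel $\tilde P_N$: from state $m$, propose $Y\sim q(m,\cdot)$, draw independent weights $W\sim Q_{m,N}$, $U\sim Q_{Y,N}$ (the laws of $W_{m,N}$, $W_{Y,N}$), and move to $Y$ with probability $\min\{1,\frac{\pi(Y)q(Y,m)}{\pi(m)q(m,Y)}\cdot\frac{U}{W}\}$, otherwise stay at $m$ (proposals outside $\mathbb{N}^+$ are rejected). *)

theory Defs
  imports "HOL-Probability.Probability"
begin

definition pi_target :: "nat \<Rightarrow> real" where
  "pi_target m = (if m \<ge> 1 then (1/2) ^ m else 0)"

definition q_prop :: "real \<Rightarrow> int \<Rightarrow> int \<Rightarrow> real" where
  "q_prop \<theta> m y = (if y = m + 1 then \<theta> else if y = m - 1 then 1 - \<theta> else 0)"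

definition b_w :: "nat \<Rightarrow> real" where
  "b_w m = real m"

definition eps_w :: "nat \<Rightarrow> real" where
  "eps_w m = 1 / real m ^ (3 - m mod 3)"

text \<open>s_m chosen so that E[W_{m,N}] = 1 (when b_m = eps_m the law of W does not depend on s_m;
  we then take s_m = 0).\<close>
definition s_w :: "nat \<Rightarrow> real" where
  "s_w m = (if b_w m = eps_w m then 0 else (1 - eps_w m) / (b_w m - eps_w m))"

definition W_law :: "nat \<Rightarrow> nat \<Rightarrow> real pmf" where
  "W_law N m = map_pmf (\<lambda>k. (b_w m - eps_w m) / real N * real k + eps_w m)
                       (binomial_pmf N (s_w m))"

definition noisy_step :: "real \<Rightarrow> nat \<Rightarrow> nat \<Rightarrow> nat pmf" where
  "noisy_step \<theta> N m =
     do { up \<leftarrow> bernoulli_pmf \<theta>;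
          let y = (if up then int m + 1 else int m - 1);
          if y < 1 then return_pmf m
          else do {
            w \<leftarrow> W_law N m;
            u \<leftarrow> W_law N (nat y);
            acc \<leftarrow> bernoulli_pmf (min 1 ((pi_target (nat y) * q_prop \<theta> y (int m)) /
                                             (pi_target m * q_prop \<theta> (int m) y) * (u / w)));
            return_pmf (if acc then nat y else m) } }"

definition kernel_pow :: "('a \<Rightarrow> 'a pmf) \<Rightarrow> nat \<Rightarrow> 'a \<Rightarrow> 'a pmf" where
  "kernel_pow P n x = ((\<lambda>p. bind_pmf p P) ^^ n) (return_pmf x)"

text \<open>Transience (Meyn--Tweedie) for a chain on a countable state space S, with the counting
  measure as irreducibility measure: the chain is irreducible on S, and S is covered by the
  countably many singletons {y}, each uniformly transient, i.e.
  sup_{x in S} E_x[number of visits to y] < infinity.\<close>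
definition transient_chain :: "('a \<Rightarrow> 'a pmf) \<Rightarrow> 'a set \<Rightarrow> bool" where
  "transient_chain P S \<longleftrightarrow>
     (\<forall>x\<in>S. \<forall>y\<in>S. \<exists>n. pmf (kernel_pow P n x) y > 0) \<and>
     (\<forall>y\<in>S. (SUP x\<in>S. (\<Sum>n. ennreal (pmf (kernel_pow P n x) y))) < \<infinity>)"

end

theory Submission
  imports Defs
begin

(*
  The noisy kernel only moves between neighbours, so it is a birth-death chain on the positive
  integers with up- and down-probabilities p m and q m. Such a chain is transient as soon as the
  weights w n = (prod k = 2..n. q k / p k) are summable: then
  h_y x = (sum i >= max x y. w i) / (p y * w y) is a bounded excessive function dominating the
  expected number of visits to y from x.

  For the noisy kernel, q m / p m = (1 - theta) / theta * a_down / a_up with acceptance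
  probabilities of the form E[min 1 (c * U / W)]. Except with probability about N / m, the weight
  W_{m,N} sits at its atom eps m, so for large m the ratio is governed by eps (m - 1) / eps m and
  eps (m + 1) / eps m. It stays bounded, and for m mod 3 = 1, where the first quotient is about
  1 / m and the second about m, it is O(1 / m). Hence every product of three consecutive ratios is
  O(1 / m) and the weights decay geometrically.
*)

section \<open>Expected number of visits\<close>

lemma kernel_pow_0 [simp]: "kernel_pow P 0 x = return_pmf x"
  by (simp add: kernel_pow_def)

lemma kernel_pow_Suc: "kernel_pow P (Suc n) x = kernel_pow P n x \<bind> P"
  by (simp add: kernel_pow_def)

lemma set_pmf_kernel_pow_subset:
  assumes "\<And>x. x \<in> S \<Longrightarrow> set_pmf (P x) \<subseteq> S" and "x \<in> S"
  shows "set_pmf (kernel_pow P n x) \<subseteq> S"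
  by (induction n) (use assms in \<open>auto simp: kernel_pow_Suc\<close>)

lemma visits_plus_excessive_le:
  fixes P :: "'a \<Rightarrow> 'a pmf" and h :: "'a \<Rightarrow> ennreal"
  assumes closed: "\<And>x. x \<in> S \<Longrightarrow> set_pmf (P x) \<subseteq> S"
    and excessive: "\<And>x. x \<in> S \<Longrightarrow> indicator {y} x + (\<integral>\<^sup>+ z. h z \<partial>P x) \<le> h x"
    and "x \<in> S"
  shows "(\<Sum>n<K. ennreal (pmf (kernel_pow P n x) y)) + (\<integral>\<^sup>+ z. h z \<partial>kernel_pow P K x) \<le> h x"
proof (induction K)
  case (Suc K)
  let ?\<mu> = "kernel_pow P K x"
  have "ennreal (pmf ?\<mu> y) + (\<integral>\<^sup>+ z. h z \<partial>kernel_pow P (Suc K) x)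
        = (\<integral>\<^sup>+ z. indicator {y} z + (\<integral>\<^sup>+ w. h w \<partial>P z) \<partial>?\<mu>)"
    by (simp add: kernel_pow_Suc emeasure_pmf_single nn_integral_add)
  also have "\<dots> \<le> (\<integral>\<^sup>+ z. h z \<partial>?\<mu>)"
  proof (intro nn_integral_mono_AE AE_pmfI)
    fix z assume "z \<in> set_pmf ?\<mu>"
    then have "z \<in> S" using set_pmf_kernel_pow_subset[of S P x K] closed \<open>x \<in> S\<close> by blast
    then show "indicator {y} z + (\<integral>\<^sup>+ w. h w \<partial>P z) \<le> h z" by (rule excessive)
  qed
  finally have step:
    "ennreal (pmf ?\<mu> y) + (\<integral>\<^sup>+ z. h z \<partial>kernel_pow P (Suc K) x) \<le> (\<integral>\<^sup>+ z. h z \<partial>?\<mu>)" .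
  have "(\<Sum>n<Suc K. ennreal (pmf (kernel_pow P n x) y)) + (\<integral>\<^sup>+ z. h z \<partial>kernel_pow P (Suc K) x)
      = (\<Sum>n<K. ennreal (pmf (kernel_pow P n x) y))
        + (ennreal (pmf ?\<mu> y) + (\<integral>\<^sup>+ z. h z \<partial>kernel_pow P (Suc K) x))"
    by (simp add: add.assoc)
  also have "\<dots> \<le> (\<Sum>n<K. ennreal (pmf (kernel_pow P n x) y)) + (\<integral>\<^sup>+ z. h z \<partial>?\<mu>)"
    using step by (rule add_left_mono)
  also have "\<dots> \<le> h x" by (rule Suc.IH)
  finally show ?case .
qed simp

lemma expected_visits_le_excessive:
  fixes P :: "'a \<Rightarrow> 'a pmf" and h :: "'a \<Rightarrow> ennreal"
  assumes "\<And>x. x \<in> S \<Longrightarrow> set_pmf (P x) \<subseteq> S"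
    and "\<And>x. x \<in> S \<Longrightarrow> indicator {y} x + (\<integral>\<^sup>+ z. h z \<partial>P x) \<le> h x"
    and "x \<in> S"
  shows "(\<Sum>n. ennreal (pmf (kernel_pow P n x) y)) \<le> h x"
  unfolding suminf_eq_SUP
proof (rule SUP_least)
  fix K
  have "(\<Sum>n<K. ennreal (pmf (kernel_pow P n x) y))
        \<le> (\<Sum>n<K. ennreal (pmf (kernel_pow P n x) y)) + (\<integral>\<^sup>+ z. h z \<partial>kernel_pow P K x)"
    by (rule add_increasing2) auto
  also have "\<dots> \<le> h x" by (rule visits_plus_excessive_le[OF assms])
  finally show "(\<Sum>n<K. ennreal (pmf (kernel_pow P n x) y)) \<le> h x" .
qed

section \<open>Summability of products\<close>

lemma summable_if_eventually_contracting:
  fixes d :: "nat \<Rightarrow> real"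
  assumes nonneg: "\<And>n. 0 \<le> d n" and "0 < k" "0 < c" "c < 1"
    and "eventually (\<lambda>n. d (n + k) \<le> c * d n) sequentially"
  shows "summable d"
proof -
  obtain M where M: "\<And>n. M \<le> n \<Longrightarrow> d (n + k) \<le> c * d n"
    using assms(5) by (auto simp: eventually_sequentially)
  define r where "r = root k c"
  have r: "0 < r" "r < 1" "r ^ k = c"
    using assms(2-4) by (auto simp: r_def real_root_gt_zero)
  define K where "K = Max ((\<lambda>n. d n / r ^ n) ` {..M + k})"
  have bound: "d n \<le> K * r ^ n" for n
  proof (induction n rule: less_induct)
    case (less n)
    show ?case
    proof (cases "n \<le> M + k")
      case True
      then have "d n / r ^ n \<le> K" unfolding K_def by (intro Max_ge) auto
      then show ?thesis using r by (simp add: field_simps)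
    next
      case False
      define n' where "n' = n - k"
      have n': "n = n' + k" "M \<le> n'" using False by (auto simp: n'_def)
      have "d n \<le> c * d n'" using M[of n'] n' by simp
      also have "\<dots> \<le> c * (K * r ^ n')"
        using less.IH[of n'] n' assms(2,3) by (intro mult_left_mono) auto
      also have "\<dots> = K * r ^ n" using r n' by (simp add: power_add)
      finally show ?thesis .
    qed
  qed
  have "summable (\<lambda>n. K * r ^ n)"
    using r by (intro summable_mult summable_geometric) simp
  then show ?thesis
  proof (rule summable_comparison_test')
    show "norm (d n) \<le> K * r ^ n" for n using bound[of n] nonneg[of n] by simp
  qed
qed

lemma summable_prod_if_eventually_block_bounded:
  fixes r :: "nat \<Rightarrow> real"
  assumes "\<And>n. 0 \<le> r n" and "0 < k" "0 < c" "c < 1"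
    and "eventually (\<lambda>n. (\<Prod>i\<in>{Suc n..n + k}. r i) \<le> c) sequentially"
  shows "summable (\<lambda>n. \<Prod>i\<in>{a..n}. r i)"
proof (rule summable_if_eventually_contracting[OF _ assms(2-4)])
  show "eventually (\<lambda>n. (\<Prod>i\<in>{a..n + k}. r i) \<le> c * (\<Prod>i\<in>{a..n}. r i)) sequentially"
    using assms(5) eventually_ge_at_top[of a]
  proof eventually_elim
    case (elim n)
    have "(\<Prod>i\<in>{a..n + k}. r i) = (\<Prod>i\<in>{a..n}. r i) * (\<Prod>i\<in>{Suc n..n + k}. r i)"
      using prod.ub_add_nat[of a n r k] elim(2) by simp
    also have "\<dots> \<le> (\<Prod>i\<in>{a..n}. r i) * c"
      using elim(1) assms(1) by (intro mult_left_mono prod_nonneg) auto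
    finally show ?case by (simp add: mult.commute)
  qed
qed (use assms(1) in \<open>auto intro: prod_nonneg\<close>)

lemma prod_three_consecutive_le:
  fixes r :: "nat \<Rightarrow> real"
  assumes "\<And>k. n < k \<Longrightarrow> 0 \<le> r k \<and> r k \<le> (if k mod 3 = 1 then C / real k else C)"
    and "0 \<le> C" "1 \<le> n"
  shows "(\<Prod>k\<in>{Suc n..n + 3}. r k) \<le> C ^ 3 / real n"
proof -
  define h :: "nat \<Rightarrow> real" where "h k = (if k mod 3 = 1 then C / real n else C)" for k
  have "(\<Prod>k\<in>{Suc n..n + 3}. r k) \<le> (\<Prod>k\<in>{Suc n..n + 3}. h k)"
  proof (rule prod_mono)
    fix k assume "k \<in> {Suc n..n + 3}"
    then have "n < k" by simp
    moreover have "C / real k \<le> C / real n" if "n < k"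
      using that assms(2,3) by (intro divide_left_mono) auto
    ultimately show "0 \<le> r k \<and> r k \<le> h k" using assms(1)[of k] unfolding h_def by (auto split: if_splits)
  qed
  also have "(\<Prod>k\<in>{Suc n..n + 3}. h k) = h (n + 1) * h (n + 2) * h (n + 3)"
    by (simp add: numeral_3_eq_3 atLeastAtMostSuc_conv)
  also have "\<dots> = C ^ 3 / real n"
  proof -
    have "(n + 1) mod 3 = 1 \<and> (n + 2) mod 3 \<noteq> 1 \<and> (n + 3) mod 3 \<noteq> 1
        \<or> (n + 1) mod 3 \<noteq> 1 \<and> (n + 2) mod 3 = 1 \<and> (n + 3) mod 3 \<noteq> 1
        \<or> (n + 1) mod 3 \<noteq> 1 \<and> (n + 2) mod 3 \<noteq> 1 \<and> (n + 3) mod 3 = 1"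
      by presburger
    then show ?thesis by (elim disjE) (simp_all add: h_def power3_eq_cube)
  qed
  finally show ?thesis .
qed

section \<open>Birth-death chains on the positive integers\<close>

definition down_up_ratio :: "(nat \<Rightarrow> nat pmf) \<Rightarrow> nat \<Rightarrow> real" where
  "down_up_ratio P x = pmf (P x) (x - 1) / pmf (P x) (Suc x)"

locale birth_death_chain =
  fixes P :: "nat \<Rightarrow> nat pmf"
  assumes support: "\<And>x. 1 \<le> x \<Longrightarrow> set_pmf (P x) \<subseteq> {x - 1, x, Suc x} - {0}"
    and up_pos: "\<And>x. 1 \<le> x \<Longrightarrow> 0 < pmf (P x) (Suc x)"
    and down_pos: "\<And>x. 2 \<le> x \<Longrightarrow> 0 < pmf (P x) (x - 1)"
begin

lemma reach_up: "1 \<le> x \<Longrightarrow> x + d \<in> set_pmf (kernel_pow P d x)"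
proof (induction d)
  case (Suc d)
  have "0 < pmf (P (x + d)) (Suc (x + d))" using up_pos Suc.prems by simp
  then have "Suc (x + d) \<in> set_pmf (P (x + d))" by (simp add: pmf_positive_iff)
  then show ?case using Suc by (auto simp: kernel_pow_Suc)
qed simp

lemma reach_down: "d < x \<Longrightarrow> x - d \<in> set_pmf (kernel_pow P d x)"
proof (induction d)
  case (Suc d)
  have "0 < pmf (P (x - d)) (x - d - 1)" using Suc.prems by (intro down_pos) simp
  then have "x - Suc d \<in> set_pmf (P (x - d))" by (simp add: pmf_positive_iff)
  then show ?case using Suc by (auto simp: kernel_pow_Suc)
qed simp

lemma irreducible:
  assumes "1 \<le> x" "1 \<le> y"
  shows "\<exists>n. 0 < pmf (kernel_pow P n x) y"
proof (cases "x \<le> y")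
  case True
  then have "y \<in> set_pmf (kernel_pow P (y - x) x)" using reach_up[OF assms(1), of "y - x"] by simp
  then show ?thesis by (auto simp: pmf_positive_iff)
next
  case False
  then have "y \<in> set_pmf (kernel_pow P (x - y) x)" using reach_down[of "x - y" x] assms by simp
  then show ?thesis by (auto simp: pmf_positive_iff)
qed

lemma pmf_step_sum:
  assumes "1 \<le> x"
  shows "pmf (P x) (x - 1) + pmf (P x) x + pmf (P x) (Suc x) = 1"
proof -
  have "(\<Sum>z\<in>{x - 1, x, Suc x}. pmf (P x) z) = 1"
    using support[OF assms] by (intro sum_pmf_eq_1) auto
  moreover have "x - 1 \<noteq> x" "x - 1 \<noteq> Suc x" using assms by auto
  ultimately show ?thesis by (simp add: add.assoc)
qed

lemma nn_integral_step:
  assumes "1 \<le> x" "\<And>z. 0 \<le> f z"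
  shows "(\<integral>\<^sup>+ z. ennreal (f z) \<partial>P x)
       = ennreal (f (x - 1) * pmf (P x) (x - 1) + f x * pmf (P x) x + f (Suc x) * pmf (P x) (Suc x))"
proof -
  have "(\<integral>\<^sup>+ z. ennreal (f z) \<partial>P x) = (\<Sum>z\<in>{x - 1, x, Suc x}. ennreal (f z) * pmf (P x) z)"
    using support[OF assms(1)] by (intro nn_integral_measure_pmf_support) auto
  also have "\<dots> = (\<Sum>z\<in>{x - 1, x, Suc x}. ennreal (f z * pmf (P x) z))"
    using assms(2) by (intro sum.cong) (auto simp: ennreal_mult)
  also have "\<dots> = ennreal (\<Sum>z\<in>{x - 1, x, Suc x}. f z * pmf (P x) z)"
    using assms(2) by (intro sum_ennreal) auto
  moreover have "x - 1 \<noteq> x" "x - 1 \<noteq> Suc x" using assms(1) by auto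
  ultimately show ?thesis by (simp add: add.assoc)
qed

definition weight :: "nat \<Rightarrow> real" where
  "weight n = (\<Prod>k\<in>{2..n}. down_up_ratio P k)"

lemma weight_pos: "0 < weight n"
  unfolding weight_def down_up_ratio_def using up_pos down_pos by (intro prod_pos) auto

lemma weight_balance:
  assumes "2 \<le> x"
  shows "pmf (P x) (Suc x) * weight x = pmf (P x) (x - 1) * weight (x - 1)"
proof -
  have "weight x = weight (x - 1) * down_up_ratio P x"
    using assms unfolding weight_def by (cases x) (auto simp: prod.nat_ivl_Suc')
  then show ?thesis using up_pos[of x] assms by (simp add: down_up_ratio_def field_simps)
qed

context
  assumes summable_weight: "summable weight"
begin

definition tail :: "nat \<Rightarrow> real" where
  "tail n = (\<Sum>i. weight (i + n))"

lemma tail_Suc: "tail n = weight n + tail (Suc n)"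
  using suminf_split_head[of "\<lambda>i. weight (i + n)"] summable_weight
  by (simp add: tail_def summable_iff_shift)

lemma tail_nonneg: "0 \<le> tail n"
  unfolding tail_def using summable_weight weight_pos
  by (intro suminf_nonneg) (auto simp: summable_iff_shift less_imp_le)

lemma tail_antimono: "a \<le> b \<Longrightarrow> tail b \<le> tail a"
proof (induction b rule: dec_induct)
  case (step n)
  then show ?case using tail_Suc[of n] weight_pos[of n] by simp
qed simp

(* Harmonic in x except at y, where its drift is exactly - 1. *)
definition green_bound :: "nat \<Rightarrow> nat \<Rightarrow> real" where
  "green_bound y x = tail (max x y) / (pmf (P y) (Suc y) * weight y)"

lemma tail_drift:
  assumes "1 \<le> x" "1 \<le> y"
  shows "pmf (P x) (x - 1) * (tail (max (x - 1) y) - tail (max x y))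
       + pmf (P x) (Suc x) * (tail (max (Suc x) y) - tail (max x y))
       = - indicator {y} x * (pmf (P y) (Suc y) * weight y)"
proof (cases x y rule: linorder_cases)
  case less
  then have "max (x - 1) y = y" "max x y = y" "max (Suc x) y = y" by auto
  then show ?thesis using less by simp
next
  case equal
  then have "max (x - 1) y = y" "max x y = y" "max (Suc x) y = Suc y" by auto
  moreover have "tail (Suc y) - tail y = - weight y" using tail_Suc[of y] by linarith
  ultimately show ?thesis unfolding equal by simp
next
  case greater
  then have "max (x - 1) y = x - 1" "max x y = x" "max (Suc x) y = Suc x" by auto
  moreover have "tail (x - 1) - tail x = weight (x - 1)"
    using tail_Suc[of "x - 1"] assms by simp
  moreover have "tail (Suc x) - tail x = - weight x" using tail_Suc[of x] by linarith
  moreover have "pmf (P x) (Suc x) * weight x = pmf (P x) (x - 1) * weight (x - 1)"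
    using greater assms(2) by (intro weight_balance) simp
  moreover have "indicator {y} x = (0 :: real)" using greater by simp
  ultimately show ?thesis by (simp only:)
qed

lemma green_bound_nonneg: "1 \<le> y \<Longrightarrow> 0 \<le> green_bound y x"
  unfolding green_bound_def using tail_nonneg up_pos weight_pos by (simp add: less_imp_le)

lemma green_bound_harmonic:
  assumes "1 \<le> x" "1 \<le> y"
  shows "indicator {y} x + (green_bound y (x - 1) * pmf (P x) (x - 1) + green_bound y x * pmf (P x) x
           + green_bound y (Suc x) * pmf (P x) (Suc x)) = green_bound y x"
proof -
  define K where "K = pmf (P y) (Suc y) * weight y"
  have K: "0 < K" using up_pos[OF assms(2)] weight_pos[of y] by (simp add: K_def)
  let ?p = "pmf (P x)" and ?H = "\<lambda>z. tail (max z y)"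
  have "?H (x - 1) * ?p (x - 1) + ?H x * ?p x + ?H (Suc x) * ?p (Suc x)
      = ?H x * (?p (x - 1) + ?p x + ?p (Suc x))
        + (?p (x - 1) * (?H (x - 1) - ?H x) + ?p (Suc x) * (?H (Suc x) - ?H x))"
    by (simp add: algebra_simps)
  also have "\<dots> = ?H x - indicator {y} x * K"
    unfolding pmf_step_sum[OF assms(1)] tail_drift[OF assms] K_def by simp
  finally have "green_bound y (x - 1) * ?p (x - 1) + green_bound y x * ?p x
      + green_bound y (Suc x) * ?p (Suc x) = (?H x - indicator {y} x * K) / K"
    unfolding green_bound_def K_def[symmetric] by (simp add: add_divide_distrib [symmetric])
  also have "\<dots> = green_bound y x - indicator {y} x"
    using K unfolding green_bound_def K_def[symmetric] by (simp add: diff_divide_distrib)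
  finally show ?thesis by simp
qed

lemma green_bound_excessive:
  assumes "1 \<le> x" "1 \<le> y"
  shows "indicator {y} x + (\<integral>\<^sup>+ z. ennreal (green_bound y z) \<partial>P x) \<le> ennreal (green_bound y x)"
proof -
  have "(\<integral>\<^sup>+ z. ennreal (green_bound y z) \<partial>P x)
      = ennreal (green_bound y (x - 1) * pmf (P x) (x - 1) + green_bound y x * pmf (P x) x
           + green_bound y (Suc x) * pmf (P x) (Suc x))"
    using green_bound_nonneg[OF assms(2)] by (intro nn_integral_step[OF assms(1)])
  then have "indicator {y} x + (\<integral>\<^sup>+ z. ennreal (green_bound y z) \<partial>P x)
      = ennreal (indicator {y} x + (green_bound y (x - 1) * pmf (P x) (x - 1) + green_bound y x * pmf (P x) x
           + green_bound y (Suc x) * pmf (P x) (Suc x)))"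
    using green_bound_nonneg[OF assms(2)] pmf_nonneg
    by (simp add: ennreal_plus ennreal_indicator)
  then show ?thesis unfolding green_bound_harmonic[OF assms] by simp
qed

theorem transient: "transient_chain P {m. 1 \<le> m}"
  unfolding transient_chain_def
proof (intro conjI ballI)
  fix x y :: nat assume "x \<in> {m. 1 \<le> m}" "y \<in> {m. 1 \<le> m}"
  then show "\<exists>n. 0 < pmf (kernel_pow P n x) y" by (simp add: irreducible)
next
  fix y :: nat assume y: "y \<in> {m. 1 \<le> m}"
  have "(\<Sum>n. ennreal (pmf (kernel_pow P n x) y)) \<le> ennreal (green_bound y y)"
    if x: "x \<in> {m. 1 \<le> m}" for x
  proof -
    have "(\<Sum>n. ennreal (pmf (kernel_pow P n x) y)) \<le> ennreal (green_bound y x)"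
    proof (rule expected_visits_le_excessive[OF _ _ x])
      show "set_pmf (P z) \<subseteq> {m. 1 \<le> m}" if "z \<in> {m. 1 \<le> m}" for z
        using support[of z] that by auto
      show "indicator {y} z + (\<integral>\<^sup>+ w. ennreal (green_bound y w) \<partial>P z) \<le> ennreal (green_bound y z)"
        if "z \<in> {m. 1 \<le> m}" for z
        using green_bound_excessive that y by simp
    qed
    also have "\<dots> \<le> ennreal (green_bound y y)"
      unfolding green_bound_def using tail_antimono[of y "max x y"] up_pos[of y] weight_pos[of y] y
      by (intro ennreal_leI divide_right_mono) auto
    finally show ?thesis .
  qed
  then have "(SUP x\<in>{m. 1 \<le> m}. \<Sum>n. ennreal (pmf (kernel_pow P n x) y)) \<le> ennreal (green_bound y y)"
    by (rule SUP_least)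
  also have "\<dots> < \<infinity>" by simp
  finally show "(SUP x\<in>{m. 1 \<le> m}. \<Sum>n. ennreal (pmf (kernel_pow P n x) y)) < \<infinity>" .
qed

end

end

section \<open>The noise weights\<close>

lemma divide_le_divide_cross:
  fixes a b c d :: "'a :: linordered_field"
  assumes "0 < b" "0 < d" "a * d \<le> c * b"
  shows "a / b \<le> c / d"
  using assms by (simp add: field_simps)

lemma eps_w_pos: "1 \<le> m \<Longrightarrow> 0 < eps_w m"
  by (simp add: eps_w_def)

lemma eps_w_le_inverse:
  assumes "1 \<le> m"
  shows "eps_w m \<le> 1 / real m"
proof -
  have "real m ^ 1 \<le> real m ^ (3 - m mod 3)"
    using assms by (intro power_increasing) auto
  then show ?thesis
    using assms unfolding eps_w_def by (intro divide_left_mono) auto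
qed

lemma eps_w_le_1: "1 \<le> m \<Longrightarrow> eps_w m \<le> 1"
  using eps_w_le_inverse[of m] by (simp add: order_trans)

lemma eps_w_le_half:
  assumes "2 \<le> m"
  shows "eps_w m \<le> 1 / 2"
proof -
  have "1 / real m \<le> 1 / 2" using assms by (intro divide_left_mono) auto
  moreover have "eps_w m \<le> 1 / real m" using eps_w_le_inverse[of m] assms by simp
  ultimately show ?thesis by linarith
qed

lemma eps_w_pred_ratio_le:
  assumes "2 \<le> m" "m mod 3 \<noteq> 0"
  shows "eps_w (m - 1) / eps_w m \<le> 8 / real m"
proof -
  obtain j where j: "m = Suc j" using assms(1) by (cases m) auto
  define k where "k = real j"
  have k: "1 \<le> k" "real m = k + 1" "real (m - 1) = k"
    using assms(1) by (auto simp: k_def j)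
  have "(k + 1) ^ 3 \<le> (2 * k) ^ 3" using k by (intro power_mono) auto
  then have cube: "(k + 1) ^ 3 \<le> 8 * k ^ 3" by simp
  show ?thesis
  proof (cases "m mod 3 = 1")
    case True
    then have "j mod 3 = 0" unfolding j by presburger
    with True have "eps_w (m - 1) / eps_w m = (k + 1) ^ 2 / k ^ 3" by (simp add: eps_w_def k_def j add.commute)
    also have "\<dots> \<le> 8 / (k + 1)"
      using k cube by (intro divide_le_divide_cross) (auto simp: power3_eq_cube power2_eq_square)
    finally show ?thesis by (simp add: k)
  next
    case False
    then have "m mod 3 = 2" using assms(2) by presburger
    moreover from this have "j mod 3 = 1" unfolding j by presburger
    ultimately have "eps_w (m - 1) / eps_w m = (k + 1) / k ^ 2" by (simp add: eps_w_def k_def j add.commute)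
    also have "\<dots> \<le> 8 / (k + 1)"
    proof (rule divide_le_divide_cross)
      have "(k + 1) ^ 2 \<le> (2 * k) ^ 2" using k by (intro power_mono) auto
      also have "\<dots> \<le> 8 * k ^ 2" by simp
      finally show "(k + 1) * (k + 1) \<le> 8 * k ^ 2" by (simp add: power2_eq_square)
    qed (use k in auto)
    finally show ?thesis by (simp add: k)
  qed
qed

lemma eps_w_Suc_ratio_ge:
  assumes "1 \<le> m" "m mod 3 \<noteq> 2"
  shows "real m / 4 \<le> eps_w (Suc m) / eps_w m"
proof -
  have x: "1 \<le> real m" using assms by simp
  show ?thesis
  proof (cases "m mod 3 = 0")
    case True
    then have "Suc m mod 3 = 1" by presburger
    have "(real m + 1) ^ 2 \<le> (2 * real m) ^ 2" using x by (intro power_mono) auto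
    then have "real m * (real m + 1) ^ 2 \<le> real m * (4 * real m ^ 2)" using x by (intro mult_left_mono) auto
    then have "real m / 4 \<le> real m ^ 3 / (real m + 1) ^ 2"
      using x by (intro divide_le_divide_cross) (auto simp: power3_eq_cube power2_eq_square)
    then show ?thesis using True \<open>Suc m mod 3 = 1\<close> by (simp add: eps_w_def add.commute)
  next
    case False
    then have "m mod 3 = 1" using assms(2) by presburger
    then have "Suc m mod 3 = 2" by presburger
    have "real m * (real m + 1) \<le> real m * (4 * real m)" using x by (intro mult_left_mono) auto
    then have "real m / 4 \<le> real m ^ 2 / (real m + 1)"
      using x by (intro divide_le_divide_cross) (auto simp: power2_eq_square)
    then show ?thesis using \<open>m mod 3 = 1\<close> \<open>Suc m mod 3 = 2\<close> by (simp add: eps_w_def add.commute)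
  qed
qed

lemma s_w_ge_2:
  assumes "2 \<le> m"
  shows "0 \<le> s_w m" "s_w m \<le> 1 / real m" "s_w m < 1" "1 / (2 * real m) \<le> s_w m"
proof -
  define e where "e = eps_w m"
  have e: "0 < e" "e \<le> 1 / 2" using eps_w_pos[of m] eps_w_le_half[OF assms] assms by (auto simp: e_def)
  have m: "2 \<le> real m" using assms by simp
  have s: "s_w m = (1 - e) / (real m - e)" using e m by (simp add: s_w_def b_w_def e_def)
  have d: "0 < real m - e" using e m by linarith
  have em: "e \<le> e * real m" using mult_left_mono[of 1 "real m" e] e m by simp
  show "0 \<le> s_w m" unfolding s using e d by simp
  show "s_w m \<le> 1 / real m" unfolding s using d em m by (simp add: divide_simps algebra_simps)
  show "s_w m < 1" unfolding s using d e m by (simp add: divide_simps)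
  have "e * (2 * real m) \<le> (1 / 2) * (2 * real m)" using e m by (intro mult_right_mono) auto
  then have "e * (real m * 2) \<le> e + real m" using e m by linarith
  then show "1 / (2 * real m) \<le> s_w m" unfolding s using d e m by (simp add: divide_simps algebra_simps)
qed

lemma s_w_bounds:
  assumes "1 \<le> m"
  shows "0 \<le> s_w m" "s_w m \<le> 1 / real m" "s_w m < 1"
proof -
  have "0 \<le> s_w m \<and> s_w m \<le> 1 / real m \<and> s_w m < 1"
  proof (cases "m = 1")
    case True
    then show ?thesis by (simp add: s_w_def b_w_def eps_w_def)
  next
    case False
    then show ?thesis using s_w_ge_2[of m] assms by simp
  qed
  then show "0 \<le> s_w m" "s_w m \<le> 1 / real m" "s_w m < 1" by auto
qed

lemma W_law_support:
  assumes "1 \<le> m" "w \<in> set_pmf (W_law N m)"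
  shows "eps_w m \<le> w"
proof -
  obtain k where "w = (b_w m - eps_w m) / real N * real k + eps_w m"
    using assms(2) by (auto simp: W_law_def)
  moreover have "eps_w m \<le> b_w m" using eps_w_le_1[OF assms(1)] assms(1) by (simp add: b_w_def)
  ultimately show ?thesis by simp
qed

lemma W_law_support_pos: "1 \<le> m \<Longrightarrow> w \<in> set_pmf (W_law N m) \<Longrightarrow> 0 < w"
  using W_law_support eps_w_pos by fastforce

definition atom_prob :: "nat \<Rightarrow> nat \<Rightarrow> real" where
  "atom_prob N m = measure_pmf.prob (W_law N m) {eps_w m}"

lemma atom_prob_ge_binomial:
  assumes "1 \<le> m"
  shows "(1 - s_w m) ^ N \<le> atom_prob N m"
proof -
  have "(1 - s_w m) ^ N = measure_pmf.prob (binomial_pmf N (s_w m)) {0}"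
    using s_w_bounds[OF assms] by (simp add: measure_pmf_single)
  also have "\<dots> \<le> atom_prob N m"
    unfolding atom_prob_def W_law_def measure_map_pmf
    by (intro measure_pmf.finite_measure_mono) auto
  finally show ?thesis .
qed

lemma atom_prob_pos:
  assumes "1 \<le> m"
  shows "0 < atom_prob N m"
proof -
  have "0 < (1 - s_w m) ^ N" using s_w_bounds(3)[OF assms] by simp
  then show ?thesis using atom_prob_ge_binomial[OF assms, of N] by linarith
qed

lemma atom_prob_ge:
  assumes "1 \<le> m"
  shows "1 - real N / real m \<le> atom_prob N m"
proof -
  have s: "0 \<le> s_w m" "s_w m \<le> 1 / real m" "s_w m < 1" using s_w_bounds[OF assms] by auto
  have "1 - real N / real m \<le> 1 - real N * s_w m"
    using mult_left_mono[OF s(2), of "real N"] by simp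
  also have "\<dots> \<le> (1 - s_w m) ^ N" using Bernoulli_inequality[of "- s_w m" N] s by simp
  also have "\<dots> \<le> atom_prob N m" by (rule atom_prob_ge_binomial[OF assms])
  finally show ?thesis .
qed

lemma W_law_tail_ge:
  assumes "1 \<le> N" "1 \<le> m"
  shows "s_w m \<le> measure_pmf.prob (W_law N m) {u. (real m - 1) / real N \<le> u}"
proof -
  let ?a = "(b_w m - eps_w m) / real N"
  have s: "0 \<le> s_w m" "s_w m \<le> 1" using s_w_bounds[OF assms(2)] by auto
  have a: "(real m - 1) / real N \<le> ?a" "0 \<le> eps_w m" "0 \<le> ?a"
    using eps_w_le_1[OF assms(2)] eps_w_pos[OF assms(2)] assms(2)
    by (auto simp: b_w_def intro!: divide_right_mono)
  have "s_w m \<le> 1 - (1 - s_w m) ^ N"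
    using power_decreasing[of 1 N "1 - s_w m"] s assms(1) by simp
  also have "\<dots> = measure_pmf.prob (binomial_pmf N (s_w m)) (UNIV - {0})"
    using s measure_pmf.prob_compl[of "{0}" "binomial_pmf N (s_w m)"] by (simp add: measure_pmf_single)
  also have "\<dots> \<le> measure_pmf.prob (W_law N m) {u. (real m - 1) / real N \<le> u}"
    unfolding W_law_def measure_map_pmf
  proof (intro measure_pmf.finite_measure_mono subsetI)
    fix k assume "k \<in> UNIV - {0 :: nat}"
    then have "?a * 1 \<le> ?a * real k" using a by (intro mult_left_mono) auto
    then show "k \<in> (\<lambda>k. ?a * real k + eps_w m) -` {u. (real m - 1) / real N \<le> u}"
      using a by auto
  qed auto
  finally show ?thesis .
qed

section \<open>Acceptance probabilities\<close>

lemma expectation_unit_interval: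
  fixes p :: "'a pmf" and F :: "'a \<Rightarrow> real"
  assumes "\<And>x. x \<in> set_pmf p \<Longrightarrow> 0 \<le> F x \<and> F x \<le> 1"
  shows "0 \<le> measure_pmf.expectation p F" "measure_pmf.expectation p F \<le> 1"
proof -
  show "0 \<le> measure_pmf.expectation p F"
    using assms by (intro integral_nonneg_AE AE_pmfI) auto
  have "measure_pmf.expectation p F \<le> measure_pmf.expectation p (\<lambda>_. 1)"
    using assms by (intro integral_mono_AE AE_pmfI measure_pmf.integrable_const_bound[where B=1]) auto
  then show "measure_pmf.expectation p F \<le> 1" by simp
qed

lemma expectation_ge_mult_prob:
  fixes p :: "'a pmf" and F :: "'a \<Rightarrow> real"
  assumes "\<And>x. x \<in> set_pmf p \<Longrightarrow> 0 \<le> F x \<and> F x \<le> 1"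
    and "\<And>x. x \<in> set_pmf p \<Longrightarrow> x \<in> B \<Longrightarrow> c \<le> F x" and "0 \<le> c"
  shows "c * measure_pmf.prob p B \<le> measure_pmf.expectation p F"
proof -
  have "c * measure_pmf.prob p B = measure_pmf.expectation p (\<lambda>x. c * indicator B x)" by simp
  also have "\<dots> \<le> measure_pmf.expectation p F"
  proof (rule integral_mono_AE)
    show "integrable (measure_pmf p) (\<lambda>x. c * indicator B x)"
      using assms(3) by (intro measure_pmf.integrable_const_bound[where B=c]) (auto split: split_indicator)
    show "integrable (measure_pmf p) F"
      using assms(1) by (intro measure_pmf.integrable_const_bound[where B=1] AE_pmfI) auto
    show "AE x in measure_pmf p. c * indicator B x \<le> F x"
      using assms by (intro AE_pmfI) (auto split: split_indicator)
  qed
  finally show ?thesis .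
qed

lemma expectation_le_add_prob_compl:
  fixes p :: "'a pmf" and F :: "'a \<Rightarrow> real"
  assumes "\<And>x. x \<in> set_pmf p \<Longrightarrow> 0 \<le> F x \<and> F x \<le> 1"
    and "\<And>x. x \<in> set_pmf p \<Longrightarrow> x \<in> B \<Longrightarrow> F x \<le> c" and "0 \<le> c"
  shows "measure_pmf.expectation p F \<le> c + (1 - measure_pmf.prob p B)"
proof -
  have "measure_pmf.expectation p F \<le> measure_pmf.expectation p (\<lambda>x. c + indicator (- B) x)"
  proof (rule integral_mono_AE)
    show "integrable (measure_pmf p) (\<lambda>x. c + indicator (- B) x)"
      using assms(3) by (intro measure_pmf.integrable_const_bound[where B="c + 1"]) (auto split: split_indicator)
    show "integrable (measure_pmf p) F"
      using assms(1) by (intro measure_pmf.integrable_const_bound[where B=1] AE_pmfI) auto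
    show "AE x in measure_pmf p. F x \<le> c + indicator (- B) x"
      using assms by (intro AE_pmfI) (force split: split_indicator)
  qed
  also have "\<dots> = c + measure_pmf.prob p (- B)"
    by (subst Bochner_Integration.integral_add) (auto simp: integrable_indicator_iff less_top[symmetric])
  also have "measure_pmf.prob p (- B) = 1 - measure_pmf.prob p B"
    using measure_pmf.prob_compl[of B p] by (simp add: Compl_eq_Diff_UNIV)
  finally show ?thesis .
qed

definition up_ratio :: "real \<Rightarrow> real" where
  "up_ratio \<theta> = (1 - \<theta>) / (2 * \<theta>)"

definition down_ratio :: "real \<Rightarrow> real" where
  "down_ratio \<theta> = 2 * \<theta> / (1 - \<theta>)"

definition accept_step :: "nat \<Rightarrow> nat \<Rightarrow> nat \<Rightarrow> real \<Rightarrow> nat pmf" where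
  "accept_step N m y c =
     pair_pmf (W_law N m) (W_law N y) \<bind>
       (\<lambda>(w, u). bernoulli_pmf (min 1 (c * u / w)) \<bind> (\<lambda>acc. return_pmf (if acc then y else m)))"

definition accept_prob :: "nat \<Rightarrow> nat \<Rightarrow> nat \<Rightarrow> real \<Rightarrow> real" where
  "accept_prob N m y c =
     measure_pmf.expectation (pair_pmf (W_law N m) (W_law N y)) (\<lambda>(w, u). min 1 (c * u / w))"

lemma set_pmf_accept_step: "set_pmf (accept_step N m y c) \<subseteq> {y, m}"
  by (auto simp: accept_step_def)

lemma accept_ratio_unit_interval:
  assumes "1 \<le> m" "1 \<le> y" "0 \<le> c" "(w, u) \<in> set_pmf (pair_pmf (W_law N m) (W_law N y))"
  shows "0 \<le> min 1 (c * u / w) \<and> min 1 (c * u / w) \<le> 1"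
  using assms W_law_support_pos[of m w N] W_law_support_pos[of y u N] by simp

lemma pmf_accept_step:
  assumes "1 \<le> m" "1 \<le> y" "y \<noteq> m" "0 \<le> c"
  shows "pmf (accept_step N m y c) y = accept_prob N m y c"
  unfolding accept_step_def accept_prob_def pmf_bind
  using accept_ratio_unit_interval[OF assms(1,2,4)] assms(3)
  by (intro integral_cong_AE AE_pmfI) (auto simp: pmf_bind)

lemma accept_prob_unit_interval:
  assumes "1 \<le> m" "1 \<le> y" "0 \<le> c"
  shows "0 \<le> accept_prob N m y c" "accept_prob N m y c \<le> 1"
  unfolding accept_prob_def
  using accept_ratio_unit_interval[OF assms]
  by (auto intro!: expectation_unit_interval)

lemma accept_prob_ge:
  assumes "1 \<le> m" "1 \<le> y" "0 \<le> c" "0 \<le> a"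
    and "\<And>w u. w \<in> A \<inter> set_pmf (W_law N m) \<Longrightarrow> u \<in> B \<inter> set_pmf (W_law N y)
           \<Longrightarrow> a \<le> min 1 (c * u / w)"
  shows "a * (measure_pmf.prob (W_law N m) A * measure_pmf.prob (W_law N y) B) \<le> accept_prob N m y c"
proof -
  let ?A = "A \<inter> set_pmf (W_law N m)" and ?B = "B \<inter> set_pmf (W_law N y)"
  have "measure_pmf.prob (W_law N m) A * measure_pmf.prob (W_law N y) B
      = measure_pmf.prob (pair_pmf (W_law N m) (W_law N y)) (?A \<times> ?B)"
    by (simp add: measure_pmf_prob_product measure_Int_set_pmf)
  then show ?thesis
    unfolding accept_prob_def using accept_ratio_unit_interval[OF assms(1-3)] assms(4,5)
    by (auto intro!: expectation_ge_mult_prob)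
qed

lemma accept_prob_ge_atoms:
  assumes "1 \<le> m" "1 \<le> y" "0 \<le> c"
  shows "min 1 (c * eps_w y / eps_w m) * (atom_prob N m * atom_prob N y) \<le> accept_prob N m y c"
  unfolding atom_prob_def
  using assms eps_w_pos[of m] eps_w_pos[of y] by (intro accept_prob_ge) auto

lemma accept_prob_le:
  assumes "1 \<le> m" "1 \<le> y" "0 \<le> c"
  shows "accept_prob N m y c \<le> c * eps_w y / eps_w m + (1 - atom_prob N m) + (1 - atom_prob N y)"
proof -
  let ?p = "pair_pmf (W_law N m) (W_law N y)"
  have "accept_prob N m y c \<le> c * eps_w y / eps_w m + (1 - measure_pmf.prob ?p ({eps_w m} \<times> {eps_w y}))"
    unfolding accept_prob_def using accept_ratio_unit_interval[OF assms] assms eps_w_pos[of m] eps_w_pos[of y]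
    by (intro expectation_le_add_prob_compl) auto
  also have "measure_pmf.prob ?p ({eps_w m} \<times> {eps_w y}) = atom_prob N m * atom_prob N y"
    using measure_pmf_prob_product[of "{eps_w m}" "{eps_w y}" "W_law N m" "W_law N y"]
    by (simp add: atom_prob_def)
  also have "1 - atom_prob N m * atom_prob N y \<le> (1 - atom_prob N m) + (1 - atom_prob N y)"
  proof -
    have "0 \<le> (1 - atom_prob N m) * (1 - atom_prob N y)"
      by (intro mult_nonneg_nonneg) (simp_all add: atom_prob_def)
    then show ?thesis by (simp add: algebra_simps)
  qed
  finally show ?thesis by simp
qed

lemma accept_prob_pos:
  assumes "1 \<le> m" "1 \<le> y" "0 < c"
  shows "0 < accept_prob N m y c"
proof -
  have "0 < min 1 (c * eps_w y / eps_w m) * (atom_prob N m * atom_prob N y)"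
    using assms eps_w_pos[of m] eps_w_pos[of y] atom_prob_pos[of m N] atom_prob_pos[of y N] by simp
  also have "\<dots> \<le> accept_prob N m y c" using assms by (intro accept_prob_ge_atoms) auto
  finally show ?thesis .
qed

lemma atom_prob_ge_3_4:
  assumes "1 \<le> m" "4 * real N \<le> real m"
  shows "3 / 4 \<le> atom_prob N m"
proof -
  have "real N / real m \<le> 1 / 4" using assms by (simp add: field_simps)
  then show ?thesis using atom_prob_ge[OF assms(1), of N] by linarith
qed

lemma accept_prob_Suc_ge_half:
  assumes "1 \<le> m" "m mod 3 \<noteq> 2" "4 * real N \<le> real m" "0 < c" "4 \<le> c * real m"
  shows "1 / 2 \<le> accept_prob N m (Suc m) c"
proof -
  have "1 \<le> c * (real m / 4)" using assms(5) by simp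
  also have "\<dots> \<le> c * (eps_w (Suc m) / eps_w m)"
    using eps_w_Suc_ratio_ge[OF assms(1,2)] assms(4) by (intro mult_left_mono) auto
  finally have "min 1 (c * eps_w (Suc m) / eps_w m) = 1" by simp
  moreover have "3 / 4 * (3 / 4) \<le> atom_prob N m * atom_prob N (Suc m)"
    using assms(1,3) by (intro mult_mono atom_prob_ge_3_4) (auto simp: atom_prob_def)
  ultimately have "1 / 2 \<le> min 1 (c * eps_w (Suc m) / eps_w m) * (atom_prob N m * atom_prob N (Suc m))"
    by simp
  also have "\<dots> \<le> accept_prob N m (Suc m) c"
    using assms by (intro accept_prob_ge_atoms) auto
  finally show ?thesis .
qed

(* Here eps (m + 1) / eps m is tiny; the move up is accepted through the binomial part of U. *)
lemma accept_prob_Suc_ge_inverse: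
  assumes "1 \<le> N" "2 \<le> m" "m mod 3 = 2" "4 * real N \<le> real m" "0 < c" "real N \<le> c * real m"
  shows "1 / (4 * real m) \<le> accept_prob N m (Suc m) c"
proof -
  let ?B = "{u. real m / real N \<le> u}"
  have eps: "eps_w m = 1 / real m" using assms(3) by (simp add: eps_w_def)
  have "1 \<le> min 1 (c * u / w)" if "w \<in> {eps_w m}" "u \<in> ?B" for w u
  proof -
    have "1 \<le> c * real m / real N" using assms(1,6) by (simp add: field_simps)
    moreover have "c * real m / real N \<le> c * u"
      using that assms(5) mult_left_mono[of "real m / real N" u c] by simp
    ultimately have "1 \<le> c * u" by linarith
    also have "\<dots> \<le> c * u * real m"
      using \<open>1 \<le> c * u\<close> assms(2) mult_left_mono[of 1 "real m" "c * u"] by simp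
    finally show ?thesis using that eps by simp
  qed
  then have "1 * (atom_prob N m * measure_pmf.prob (W_law N (Suc m)) ?B) \<le> accept_prob N m (Suc m) c"
    unfolding atom_prob_def using assms(2,5) by (intro accept_prob_ge) auto
  moreover have "3 / 4 * (1 / (2 * real (Suc m))) \<le> atom_prob N m * measure_pmf.prob (W_law N (Suc m)) ?B"
  proof (intro mult_mono)
    show "3 / 4 \<le> atom_prob N m" using assms(2,4) by (intro atom_prob_ge_3_4) auto
    have "1 / (2 * real (Suc m)) \<le> s_w (Suc m)" using assms(2) by (intro s_w_ge_2) auto
    also have "\<dots> \<le> measure_pmf.prob (W_law N (Suc m)) ?B"
      using W_law_tail_ge[OF assms(1), of "Suc m"] by simp
    finally show "1 / (2 * real (Suc m)) \<le> measure_pmf.prob (W_law N (Suc m)) ?B" .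
  qed (auto simp: atom_prob_def)
  moreover have "1 / (4 * real m) \<le> 3 / 4 * (1 / (2 * real (Suc m)))"
    using assms(2) by (simp add: field_simps)
  ultimately show ?thesis by simp
qed

lemma accept_prob_pred_le:
  assumes "2 \<le> m" "m mod 3 \<noteq> 0" "0 \<le> c"
  shows "accept_prob N m (m - 1) c \<le> (3 * real N + 8 * c) / real m"
proof -
  have m: "2 \<le> real m" "real (m - 1) = real m - 1" using assms(1) by (auto simp: of_nat_diff)
  have "accept_prob N m (m - 1) c
      \<le> c * eps_w (m - 1) / eps_w m + (1 - atom_prob N m) + (1 - atom_prob N (m - 1))"
    using assms by (intro accept_prob_le) auto
  also have "\<dots> \<le> c * (8 / real m) + real N / real m + real N / (real m - 1)"
  proof -
    have "c * eps_w (m - 1) / eps_w m \<le> c * (8 / real m)"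
      using mult_left_mono[OF eps_w_pred_ratio_le[OF assms(1,2)] assms(3)] by simp
    moreover have "1 - atom_prob N m \<le> real N / real m" using atom_prob_ge[of m N] assms(1) by simp
    moreover have "1 - atom_prob N (m - 1) \<le> real N / (real m - 1)"
      using atom_prob_ge[of "m - 1" N] assms(1) m(2) by (simp add: Suc_le_eq)
    ultimately show ?thesis by linarith
  qed
  also have "\<dots> \<le> c * (8 / real m) + real N / real m + real N * (2 / real m)"
  proof -
    have "1 / (real m - 1) \<le> 2 / real m" using m by (simp add: field_simps)
    then show ?thesis using mult_left_mono[of "1 / (real m - 1)" "2 / real m" "real N"] by simp
  qed
  also have "\<dots> = (3 * real N + 8 * c) / real m" by (simp add: field_simps add_divide_distrib)
  finally show ?thesis .
qed

section \<open>The noisy kernel\<close>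

definition ratio_bound :: "real \<Rightarrow> nat \<Rightarrow> real" where
  "ratio_bound \<theta> N = (1 - \<theta>) / \<theta> * (4 * (3 * real N + 8 * down_ratio \<theta>) + 2)"

context
  fixes \<theta> :: real
  assumes theta: "0 < \<theta>" "\<theta> < 1"
begin

lemma noisy_step_eq:
  assumes "1 \<le> m"
  shows "noisy_step \<theta> N m = bernoulli_pmf \<theta> \<bind> (\<lambda>up.
           if up then accept_step N m (Suc m) (up_ratio \<theta>)
           else if m = 1 then return_pmf m else accept_step N m (m - 1) (down_ratio \<theta>))"
  unfolding noisy_step_def Let_def
proof (intro bind_pmf_cong refl)
  fix up :: bool
  have up: "pi_target (Suc m) * q_prop \<theta> (int m + 1) (int m) / (pi_target m * q_prop \<theta> (int m) (int m + 1))
      = up_ratio \<theta>"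
    using theta assms by (simp add: pi_target_def q_prop_def up_ratio_def field_simps)
  have down: "pi_target (m - 1) * q_prop \<theta> (int m - 1) (int m) / (pi_target m * q_prop \<theta> (int m) (int m - 1))
      = down_ratio \<theta>" if "2 \<le> m"
    using theta that by (simp add: pi_target_def q_prop_def down_ratio_def field_simps power_diff)
  show "(if (if up then int m + 1 else int m - 1) < 1 then return_pmf m
         else W_law N m \<bind> (\<lambda>w. W_law N (nat (if up then int m + 1 else int m - 1)) \<bind> (\<lambda>u.
           bernoulli_pmf (min 1 (pi_target (nat (if up then int m + 1 else int m - 1)) *
             q_prop \<theta> (if up then int m + 1 else int m - 1) (int m) /
             (pi_target m * q_prop \<theta> (int m) (if up then int m + 1 else int m - 1)) * (u / w))) \<bind>
           (\<lambda>acc. return_pmf (if acc then nat (if up then int m + 1 else int m - 1) else m)))))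
      = (if up then accept_step N m (Suc m) (up_ratio \<theta>)
         else if m = 1 then return_pmf m else accept_step N m (m - 1) (down_ratio \<theta>))"
  proof (cases up)
    case True
    have "nat (int m + 1) = Suc m" by simp
    then show ?thesis
      using True up
      by (simp add: accept_step_def pair_pmf_def bind_assoc_pmf bind_return_pmf mult.commute)
         (simp only: \<open>nat (int m + 1) = Suc m\<close>)
  next
    case False
    show ?thesis
    proof (cases "m = 1")
      case m2: False
      have n: "nat (int m - 1) = m - 1" using assms by simp
      then show ?thesis
        using False m2 down assms
        by (simp add: accept_step_def pair_pmf_def bind_assoc_pmf bind_return_pmf mult.commute)
           (simp only: n)
    qed (use False in simp)
  qed
qed

lemma up_ratio_pos: "0 < up_ratio \<theta>"
  using theta by (simp add: up_ratio_def)

lemma down_ratio_pos: "0 < down_ratio \<theta>"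
  using theta by (simp add: down_ratio_def)

lemma set_pmf_noisy_step:
  assumes "1 \<le> m"
  shows "set_pmf (noisy_step \<theta> N m) \<subseteq> {m - 1, m, Suc m} - {0}"
proof -
  have "set_pmf (noisy_step \<theta> N m) \<subseteq> (if m = 1 then {m, Suc m} else {m - 1, m, Suc m})"
    unfolding noisy_step_eq[OF assms] accept_step_def by (auto split: if_splits)
  then show ?thesis using assms by (auto split: if_splits)
qed

lemma pmf_noisy_step_Suc:
  assumes "1 \<le> m"
  shows "pmf (noisy_step \<theta> N m) (Suc m) = \<theta> * accept_prob N m (Suc m) (up_ratio \<theta>)"
proof -
  have "pmf (if m = 1 then return_pmf m else accept_step N m (m - 1) (down_ratio \<theta>)) (Suc m) = 0"
    using set_pmf_accept_step[of N m "m - 1" "down_ratio \<theta>"] by (auto simp: pmf_eq_0_set_pmf)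
  then show ?thesis
    unfolding noisy_step_eq[OF assms] using theta assms up_ratio_pos
    by (simp add: pmf_bind pmf_accept_step)
qed

lemma pmf_noisy_step_pred:
  assumes "2 \<le> m"
  shows "pmf (noisy_step \<theta> N m) (m - 1) = (1 - \<theta>) * accept_prob N m (m - 1) (down_ratio \<theta>)"
proof -
  have "pmf (accept_step N m (Suc m) (up_ratio \<theta>)) (m - 1) = 0"
    using set_pmf_accept_step[of N m "Suc m" "up_ratio \<theta>"] assms by (auto simp: pmf_eq_0_set_pmf)
  moreover have "1 \<le> m" using assms by simp
  ultimately show ?thesis
    unfolding noisy_step_eq[OF \<open>1 \<le> m\<close>] using theta assms down_ratio_pos
    by (simp add: pmf_bind pmf_accept_step)
qed

lemma birth_death_chain_noisy_step: "birth_death_chain (noisy_step \<theta> N)"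
proof
  show "set_pmf (noisy_step \<theta> N x) \<subseteq> {x - 1, x, Suc x} - {0}" if "1 \<le> x" for x
    using set_pmf_noisy_step[OF that] .
  show "0 < pmf (noisy_step \<theta> N x) (Suc x)" if "1 \<le> x" for x
    using that theta up_ratio_pos by (simp add: pmf_noisy_step_Suc accept_prob_pos)
  show "0 < pmf (noisy_step \<theta> N x) (x - 1)" if "2 \<le> x" for x
    unfolding pmf_noisy_step_pred[OF that] using that theta down_ratio_pos by (simp add: accept_prob_pos)
qed

lemma down_up_ratio_noisy_step:
  assumes "2 \<le> m"
  shows "down_up_ratio (noisy_step \<theta> N) m
       = (1 - \<theta>) / \<theta> * (accept_prob N m (m - 1) (down_ratio \<theta>) / accept_prob N m (Suc m) (up_ratio \<theta>))"
  using assms unfolding down_up_ratio_def pmf_noisy_step_pred[OF assms] by (simp add: pmf_noisy_step_Suc)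

lemma down_up_ratio_noisy_step_le:
  assumes "1 \<le> N" "2 \<le> m" "4 * real N \<le> real m"
    and "4 \<le> up_ratio \<theta> * real m" "real N \<le> up_ratio \<theta> * real m"
  shows "down_up_ratio (noisy_step \<theta> N) m
         \<le> (if m mod 3 = 1 then ratio_bound \<theta> N / real m else ratio_bound \<theta> N)"
proof -
  define T where "T = (1 - \<theta>) / \<theta>"
  define D where "D = 3 * real N + 8 * down_ratio \<theta>"
  have T: "0 < T" and D: "0 < D" using theta down_ratio_pos by (auto simp: T_def D_def)
  have C: "ratio_bound \<theta> N = 4 * T * D + 2 * T" by (simp add: ratio_bound_def T_def D_def algebra_simps)
  let ?down = "accept_prob N m (m - 1) (down_ratio \<theta>)" and ?up = "accept_prob N m (Suc m) (up_ratio \<theta>)"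
  have ratio: "down_up_ratio (noisy_step \<theta> N) m = T * (?down / ?up)"
    using down_up_ratio_noisy_step[OF assms(2)] by (simp add: T_def)
  have ratio_le: "down_up_ratio (noisy_step \<theta> N) m \<le> T * X" if "?down / ?up \<le> X" for X
    unfolding ratio using that T by (intro mult_left_mono) auto
  have down_nonneg: "0 \<le> ?down"
    using assms(2) down_ratio_pos by (intro accept_prob_unit_interval) auto
  have down_le: "?down \<le> D / real m" if "m mod 3 \<noteq> 0"
    unfolding D_def by (rule accept_prob_pred_le[OF assms(2) that]) (use down_ratio_pos in simp)
  have "m mod 3 = 0 \<or> m mod 3 = 1 \<or> m mod 3 = 2" by presburger
  then show ?thesis
  proof (elim disjE)
    assume 0: "m mod 3 = 0"
    have "?down / ?up \<le> 1 / (1 / 2)"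
      using assms 0 down_nonneg up_ratio_pos down_ratio_pos
      by (intro frac_le accept_prob_unit_interval accept_prob_Suc_ge_half) auto
    then have "down_up_ratio (noisy_step \<theta> N) m \<le> T * (1 / (1 / 2))" by (rule ratio_le)
    also have "\<dots> \<le> 4 * T * D + 2 * T" using T D by simp
    finally show ?thesis using 0 C by simp
  next
    assume 1: "m mod 3 = 1"
    have "?down / ?up \<le> (D / real m) / (1 / 2)"
      using assms 1 D down_nonneg up_ratio_pos
      by (intro frac_le down_le accept_prob_Suc_ge_half) auto
    then have "down_up_ratio (noisy_step \<theta> N) m \<le> T * ((D / real m) / (1 / 2))" by (rule ratio_le)
    also have "\<dots> \<le> (4 * T * D + 2 * T) / real m" using T D assms(2) by (simp add: field_simps)
    finally show ?thesis using 1 C by simp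
  next
    assume 2: "m mod 3 = 2"
    have "?down / ?up \<le> (D / real m) / (1 / (4 * real m))"
      using assms 2 D down_nonneg up_ratio_pos
      by (intro frac_le down_le accept_prob_Suc_ge_inverse) auto
    also have "\<dots> = 4 * D" using assms(2) by simp
    finally have "down_up_ratio (noisy_step \<theta> N) m \<le> T * (4 * D)" by (rule ratio_le)
    then show ?thesis using 2 C T by simp
  qed
qed

lemma summable_weight_noisy_step:
  assumes "1 \<le> N"
  shows "summable (\<lambda>n. \<Prod>k\<in>{2..n}. down_up_ratio (noisy_step \<theta> N) k)"
proof -
  let ?C = "ratio_bound \<theta> N"
  have C: "0 \<le> ?C" using theta down_ratio_pos by (simp add: ratio_bound_def)
  have "\<forall>Z. eventually (\<lambda>m. Z \<le> real m) sequentially"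
    using filterlim_real_sequentially by (simp add: filterlim_at_top)
  then obtain M
    where M: "\<And>m. M \<le> m \<Longrightarrow> max (max 2 (4 * real N)) ((4 + real N) / up_ratio \<theta>) \<le> real m"
    unfolding eventually_sequentially by blast
  have bound: "down_up_ratio (noisy_step \<theta> N) m \<le> (if m mod 3 = 1 then ?C / real m else ?C)"
    if "M \<le> m" for m
    using M[OF that] up_ratio_pos by (intro down_up_ratio_noisy_step_le assms) (auto simp: field_simps)
  have nonneg: "0 \<le> down_up_ratio (noisy_step \<theta> N) k" for k
    by (simp add: down_up_ratio_def)
  have "eventually (\<lambda>n. (\<Prod>k\<in>{Suc n..n + 3}. down_up_ratio (noisy_step \<theta> N) k) \<le> 1 / 2) sequentially"
    using eventually_ge_at_top[of "max (max M 1) (nat \<lceil>2 * ?C ^ 3\<rceil>)"]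
  proof eventually_elim
    case (elim n)
    then have n: "M \<le> n" "1 \<le> n" "real (nat \<lceil>2 * ?C ^ 3\<rceil>) \<le> real n" by auto
    then have "2 * ?C ^ 3 \<le> real n" using real_nat_ceiling_ge[of "2 * ?C ^ 3"] by linarith
    have "(\<Prod>k\<in>{Suc n..n + 3}. down_up_ratio (noisy_step \<theta> N) k) \<le> ?C ^ 3 / real n"
      using bound n(1) nonneg C n(2) by (intro prod_three_consecutive_le) auto
    also have "\<dots> \<le> 1 / 2" using n(2) \<open>2 * ?C ^ 3 \<le> real n\<close> by (simp add: field_simps)
    finally show ?case .
  qed
  then show ?thesis
    using nonneg by (intro summable_prod_if_eventually_block_bounded[where c="1/2"]) auto
qed

end

theorem proposition3p14:
  fixes \<theta> :: real and N :: nat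
  assumes "0 < \<theta>" and "\<theta> < 1" and "N \<ge> 1"
  shows "transient_chain (noisy_step \<theta> N) {m. m \<ge> 1}"
proof -
  interpret birth_death_chain "noisy_step \<theta> N"
    using assms(1,2) by (rule birth_death_chain_noisy_step)
  have "summable weight"
    using summable_weight_noisy_step[OF assms] by (simp add: weight_def[abs_def])
  then show ?thesis by (rule transient)
qed

end
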